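(* For all integers $a,b,l\ge0$, $$\sum_{\tau\in P(a,b)}(-1)^{|\hat\tau|}\,s_{(\tau+l-b)\cup(\hat\tau+l)}=\binom{a+b}{a}\,s_{(l^{a+b})}\quad\text{in }\operatorname{Sym}_{a+b},$$ where $\tau+l-b=(\tau_1+l-b,\dots,\tau_a+l-b)\in\mathbb Z^a$ and $\hat\tau+l=(\hat\tau_1+l,\dots,\hat\tau_b+l)\in\mathbb Z^b$. Equivalently, in terms of the wedge product, $\sum_{\tau\in P(a,b)}(-1)^{|\hat\tau|}\wedge_{a,b}(s_{l^a}s_\tau, s_{\hat\tau}s_{l^b})=\binom{a+b}{a}s_{(l^{a+b})}$.
   Context: $\operatorname{Sym}_k=\mathbb Z[x_1,\dots,x_k]^{S_k}$. $P(a,b)$ is the set of partitions $\lambda=(\lambda_1\ge\dots\ge\lambda_a\ge0)$ with at most $a$ parts and $\lambda_1\le b$; $|\lambda|=\sum\lambda_i$. For $\lambda\in P(a,b)$, the complementary partition is $\lambda^c=(b-\lambda_a,\dots,b-\lambda_1)$, the conjugate $\lambda^t$ has $\lambda^t_j=\#\{i:\lambda_i\ge j\}$, and $\hat\lambda=(\lambda^c)^t\in P(b,a)$ (regarded as a length-$b$ sequence padded with zeros). $(l^k)$ denotes $(l,\dots,l)$ ($k$ entries). For $\mu\in\mathbb Z^k$ with $\mu_j\ge j-k$, $s_\mu=\det(x_i^{\mu_j+k-j})_{1\le i,j\le k}/\det(x_i^{k-j})_{1\le i,j\le k}$; for $\lambda\in\mathbb Z^a,\mu\in\mathbb Z^b$,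 $\lambda\cup\mu=(\lambda_1,\dots,\lambda_a,\mu_1,\dots,\mu_b)$. The wedge product is $\wedge_{a,b}(s_\lambda,s_\mu)=s_{(\lambda-b)\cup\mu}$ for $\lambda\in P(a)$, $\mu\in P(b)$, extended bilinearly. *)

theory Defs
  imports Main "Jordan_Normal_Form.Determinant"
begin

definition partitions_box :: "nat \<Rightarrow> nat \<Rightarrow> nat list set" where
  "partitions_box a b = {ls. length ls = a \<and> sorted_wrt (\<ge>) ls \<and> (\<forall>v\<in>set ls. v \<le> b)}"

definition part_size :: "nat list \<Rightarrow> nat" where
  "part_size ls = sum_list ls"

definition part_compl :: "nat \<Rightarrow> nat list \<Rightarrow> nat list" where
  "part_compl b ls = rev (map (\<lambda>v. b - v) ls)"

definition part_conj :: "nat \<Rightarrow> nat list \<Rightarrow> nat list" where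
  "part_conj m ls = map (\<lambda>j. length (filter (\<lambda>v. v \<ge> j) ls)) [1..<m+1]"

definition part_hat :: "nat \<Rightarrow> nat list \<Rightarrow> nat list" where
  "part_hat b ls = part_conj b (part_compl b ls)"

text \<open>Schur function s_mu in k variables x_0,...,x_(k-1), as the ratio of alternants
  det(x_i^(mu_j+k-j)) / det(x_i^(k-j)) (1-based j; here 0-based, so exponent mu_j + k - 1 - j).
  Exponents are nonnegative whenever mu_j >= j - k, the paper's standing hypothesis.\<close>
definition schur :: "nat \<Rightarrow> int list \<Rightarrow> (nat \<Rightarrow> real) \<Rightarrow> real" where
  "schur k mu x =
     det (mat k k (\<lambda>(i,j). x i ^ nat (mu ! j + int k - 1 - int j)))
   / det (mat k k (\<lambda>(i,j). x i ^ (k - 1 - j)))"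

end

theory Submission
  imports Defs
begin

text \<open>Put \<open>n = a + b\<close>. In the alternant defining the \<open>\<tau>\<close>-th Schur function the column
  exponents are \<open>\<tau>_j + (a - j) + l\<close> and \<open>hat\<tau>_k + (b - k) + l\<close>. The numbers \<open>\<tau>_j + a - j\<close>
  and \<open>hat\<tau>_k + b - k\<close> together form a permutation of \<open>{0, ..., n - 1}\<close> (the classical
  complementarity between a partition in the \<open>a \<times> b\<close> box and the conjugate of its
  complement) with exactly \<open>|hat\<tau>|\<close> ascending pairs. Sorting the columns therefore turns the
  \<open>\<tau>\<close>-th Schur function into \<open>(-1)^|hat\<tau>| s_(l^n)\<close>, so every term of the sum equals
  \<open>s_(l^n)\<close>, and the box holds \<open>(a + b choose a)\<close> partitions. Both combinatorial facts follow
  by induction on \<open>a + b\<close>, splitting \<open>P(a+1, b+1)\<close> according to whether the last part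
  is zero.\<close>

fun ascending_pairs :: "'a::linorder list \<Rightarrow> nat" where
  "ascending_pairs [] = 0"
| "ascending_pairs (x # xs) = length (filter (\<lambda>y. x < y) xs) + ascending_pairs xs"

lemma ascending_pairs_append:
  "ascending_pairs (xs @ ys) =
     ascending_pairs xs + ascending_pairs ys + (\<Sum>x\<leftarrow>xs. length (filter (\<lambda>y. x < y) ys))"
  by (induction xs) auto

lemma ascending_pairs_map:
  "strict_mono f \<Longrightarrow> ascending_pairs (map f xs) = ascending_pairs xs"
  by (induction xs) (auto simp: filter_map o_def strict_mono_less)

lemma ascending_pairs_swap_adjacent:
  assumes "Suc k < length e" "e ! k < e ! Suc k"
  shows "ascending_pairs e = Suc (ascending_pairs (e[k := e ! Suc k, Suc k := e ! k]))"
proof -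
  let ?xs = "take k e" and ?ys = "drop (Suc (Suc k)) e"
  have e: "e = ?xs @ e ! k # e ! Suc k # ?ys"
    using assms(1) by (simp add: Cons_nth_drop_Suc)
  have "(?xs @ u # v # ?ys)[k := v, Suc k := u] = ?xs @ v # u # ?ys" for u v
    using assms(1) by (simp add: list_update_append)
  then have swapped: "e[k := e ! Suc k, Suc k := e ! k] = ?xs @ e ! Suc k # e ! k # ?ys"
    using e by metis
  have "(\<Sum>x\<leftarrow>?xs. length (filter (\<lambda>y. x < y) (e ! k # e ! Suc k # ?ys)))
      = (\<Sum>x\<leftarrow>?xs. length (filter (\<lambda>y. x < y) (e ! Suc k # e ! k # ?ys)))"
    by (auto intro: arg_cong[where f = sum_list] map_cong)
  then show ?thesis
    using assms(2) by (subst e, subst swapped) (simp only: ascending_pairs_append, simp)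
qed

lemma strict_mono_Suc: "strict_mono Suc"
  by (simp add: strict_mono_def)

lemma ascending_pairs_insert_0:
  "ascending_pairs (map Suc p @ 0 # map Suc q) = ascending_pairs (p @ q) + length q"
  by (simp add: ascending_pairs_append ascending_pairs_map strict_mono_Suc filter_map o_def)

lemma ascending_pairs_snoc_0: "ascending_pairs (xs @ [0 :: nat]) = ascending_pairs xs"
  by (simp add: ascending_pairs_append filter_empty_conv not_less)

lemma ascending_pairs_eq_0_iff:
  "distinct e \<Longrightarrow> ascending_pairs e = 0 \<longleftrightarrow> sorted_wrt (>) e"
  by (induction e) (auto simp: filter_empty_conv, metis linorder_neqE)

lemma sorted_desc_eq_rev_upt:
  assumes "sorted_wrt (>) e" "set e = {..<length e}"
  shows "e = rev [0..<length e]"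
proof -
  have "rev e = [0..<length e]"
    using assms by (intro strict_sorted_equal) (auto simp: sorted_wrt_rev atLeast0LessThan)
  then show ?thesis by (simp add: rev_swap)
qed

lemma ascending_pairs_rev_upt: "ascending_pairs (rev [0..<n]) = 0"
  by (simp add: ascending_pairs_eq_0_iff sorted_wrt_rev)

lemma adjacent_ascent_if_not_sorted_desc:
  fixes e :: "'a::linorder list"
  assumes "distinct e" "\<not> sorted_wrt (>) e"
  obtains k where "Suc k < length e" "e ! k < e ! Suc k"
proof -
  have "transp ((>) :: 'a \<Rightarrow> 'a \<Rightarrow> bool)" by (auto simp: transp_def)
  then obtain k where k: "Suc k < length e" "\<not> e ! Suc k < e ! k"
    using assms(2) sorted_wrt_iff_nth_Suc_transp by blast
  moreover have "e ! k \<noteq> e ! Suc k"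
    using k(1) assms(1) by (simp add: nth_eq_iff_index_eq)
  ultimately show thesis using that by simp
qed

lemma det_mat_permuted_columns:
  fixes f :: "nat \<Rightarrow> nat \<Rightarrow> 'a::comm_ring_1"
  assumes "distinct e" "set e = {..<length e}"
  shows "det (mat (length e) (length e) (\<lambda>(i,j). f i (e ! j)))
       = (-1) ^ ascending_pairs e * det (mat (length e) (length e) (\<lambda>(i,j). f i (length e - 1 - j)))"
  using assms
proof (induction "ascending_pairs e" arbitrary: e)
  case 0
  define n where "n = length e"
  have e: "e = rev [0..<n]"
    using 0 ascending_pairs_eq_0_iff sorted_desc_eq_rev_upt unfolding n_def by metis
  have "e ! j = n - 1 - j" if "j < n" for j
    using that unfolding e by (simp add: rev_nth)
  then have "mat n n (\<lambda>(i,j). f i (e ! j)) = mat n n (\<lambda>(i,j). f i (n - 1 - j))"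
    by (intro eq_matI) auto
  then show ?case
    using "0.hyps" by (simp add: n_def)
next
  case (Suc m)
  let ?n = "length e"
  obtain k where k: "Suc k < ?n" "e ! k < e ! Suc k"
    using adjacent_ascent_if_not_sorted_desc Suc.prems(1) ascending_pairs_eq_0_iff Suc.hyps(2)
    by (metis nat.distinct(1))
  define e' where "e' = e[k := e ! Suc k, Suc k := e ! k]"
  have e': "length e' = ?n" "distinct e'" "set e' = set e" "ascending_pairs e' = m"
    using k Suc.prems(1) Suc.hyps(2) ascending_pairs_swap_adjacent[OF k]
    by (simp_all add: e'_def)
  have "mat ?n ?n (\<lambda>(i,j). f i (e ! j)) = swapcols k (Suc k) (mat ?n ?n (\<lambda>(i,j). f i (e' ! j)))"
    using k by (intro eq_matI) (auto simp: mat_swapcols_def e'_def nth_list_update)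
  then have "det (mat ?n ?n (\<lambda>(i,j). f i (e ! j))) = - det (mat ?n ?n (\<lambda>(i,j). f i (e' ! j)))"
    using k by (simp add: det_swapcols[of k ?n "Suc k"])
  also have "\<dots> = (-1) ^ Suc m * det (mat ?n ?n (\<lambda>(i,j). f i (?n - 1 - j)))"
    using Suc.hyps(1)[of e'] e' Suc.prems(2) by simp
  finally show ?case
    using Suc.hyps(2) by simp
qed

lemma schur_eq_if_exponents_permuted:
  assumes "distinct e" "set e = {..<n}"
    and "\<And>j. j < n \<Longrightarrow> \<mu> ! j + int n - 1 - int j = int (e ! j + l)"
  shows "schur n \<mu> x = (-1) ^ ascending_pairs e * schur n (replicate n (int l)) x"
proof -
  have n: "length e = n"
    using assms(1,2) distinct_card by fastforce
  let ?V = "det (mat n n (\<lambda>(i,j). x i ^ (n - 1 - j)))"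
  have "mat n n (\<lambda>(i,j). x i ^ nat (\<mu> ! j + int n - 1 - int j)) = mat n n (\<lambda>(i,j). x i ^ (e ! j + l))"
    using assms(3) by (intro eq_matI) (simp_all flip: of_nat_add)
  then have "schur n \<mu> x = det (mat n n (\<lambda>(i,j). x i ^ (e ! j + l))) / ?V"
    unfolding schur_def by simp
  also have "\<dots> = (-1) ^ ascending_pairs e * (det (mat n n (\<lambda>(i,j). x i ^ (n - 1 - j + l))) / ?V)"
    using det_mat_permuted_columns[OF assms(1), of "\<lambda>i k. x i ^ (k + l)"] assms(2) n by simp
  also have "det (mat n n (\<lambda>(i,j). x i ^ (n - 1 - j + l))) / ?V = schur n (replicate n (int l)) x"
  proof -
    have "nat (int l + int n - 1 - int j) = n - 1 - j + l" if "j < n" for j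
      using that by linarith
    then show ?thesis
      unfolding schur_def by (intro arg_cong2[where f = "(/)"] arg_cong[where f = det] eq_matI) auto
  qed
  finally show ?thesis .
qed

fun add_staircase :: "nat list \<Rightarrow> nat list" where
  "add_staircase [] = []"
| "add_staircase (x # xs) = (x + length xs) # add_staircase xs"

lemma length_add_staircase [simp]: "length (add_staircase xs) = length xs"
  by (induction xs) auto

lemma nth_add_staircase:
  "j < length xs \<Longrightarrow> add_staircase xs ! j = xs ! j + (length xs - 1 - j)"
  by (induction xs arbitrary: j) (auto simp: nth_Cons split: nat.split)

lemma add_staircase_snoc_0: "add_staircase (xs @ [0]) = map Suc (add_staircase xs) @ [0]"
  by (induction xs) auto

lemma add_staircase_map_Suc: "add_staircase (map Suc xs) = map Suc (add_staircase xs)"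
  by (induction xs) auto

lemma add_staircase_replicate_0: "add_staircase (replicate n 0) = rev [0..<n]"
  by (induction n) auto

lemma sum_list_map_Suc: "sum_list (map Suc xs) = sum_list xs + length xs"
  by (induction xs) auto

lemma partitions_box_0_left: "partitions_box 0 b = {[]}"
  by (auto simp: partitions_box_def)

lemma partitions_box_0_right: "partitions_box a 0 = {replicate a 0}"
  by (auto simp: partitions_box_def replicate_eqI sorted_wrt_iff_nth_less)

lemma partitions_box_Suc_Suc:
  "partitions_box (Suc a) (Suc b) =
     (\<lambda>t. t @ [0]) ` partitions_box a (Suc b) \<union> map Suc ` partitions_box (Suc a) b"
proof (intro equalityI subsetI)
  fix \<tau> assume \<tau>: "\<tau> \<in> partitions_box (Suc a) (Suc b)"
  then have "length \<tau> = Suc a"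
    by (simp add: partitions_box_def)
  then obtain t v where tv: "\<tau> = t @ [v]"
    by (auto simp: length_Suc_conv_rev)
  have t: "length t = a" "sorted_wrt (\<ge>) t" "\<forall>u\<in>set t. v \<le> u \<and> u \<le> Suc b" "v \<le> Suc b"
    using \<tau> by (auto simp: partitions_box_def tv sorted_wrt_append)
  show "\<tau> \<in> (\<lambda>t. t @ [0]) ` partitions_box a (Suc b) \<union> map Suc ` partitions_box (Suc a) b"
  proof (cases v)
    case 0
    then have "t \<in> partitions_box a (Suc b)"
      using t by (simp add: partitions_box_def)
    then show ?thesis
      using 0 tv by blast
  next
    case Suc
    have pos: "\<forall>u\<in>set \<tau>. 0 < u"
      using t Suc tv by auto
    have "\<tau> = map Suc (map (\<lambda>u. u - 1) \<tau>)"
      using pos by (simp add: map_idI)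
    moreover have "map (\<lambda>u. u - 1) \<tau> \<in> partitions_box (Suc a) b"
      using \<tau> pos unfolding partitions_box_def
      by (auto simp: sorted_wrt_map elim!: sorted_wrt_mono_rel[rotated])
    ultimately show ?thesis by blast
  qed
next
  fix \<tau> assume "\<tau> \<in> (\<lambda>t. t @ [0]) ` partitions_box a (Suc b) \<union> map Suc ` partitions_box (Suc a) b"
  then show "\<tau> \<in> partitions_box (Suc a) (Suc b)"
    by (auto simp: partitions_box_def sorted_wrt_append sorted_wrt_map)
qed

lemma nat_pair_induct:
  assumes "\<And>b. P 0 b" "\<And>a. P a 0" "\<And>a b. P a (Suc b) \<Longrightarrow> P (Suc a) b \<Longrightarrow> P (Suc a) (Suc b)"
  shows "P a b"
proof (induction a arbitrary: b)
  case 0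
  then show ?case using assms(1) .
next
  case (Suc a)
  show ?case by (induction b) (use Suc assms(2,3) in auto)
qed

lemma card_partitions_box: "finite (partitions_box a b) \<and> card (partitions_box a b) = (a + b) choose a"
proof (induction a b rule: nat_pair_induct)
  case (1 b)
  show ?case by (simp add: partitions_box_0_left)
next
  case (2 a)
  show ?case by (simp add: partitions_box_0_right)
next
  case (3 a b)
  let ?A = "(\<lambda>t. t @ [0]) ` partitions_box a (Suc b)"
  let ?B = "map Suc ` partitions_box (Suc a) b"
  have "finite ?A" "finite ?B" "?A \<inter> ?B = {}"
    using 3 by (auto dest!: arg_cong[where f = "\<lambda>xs. 0 \<in> set xs"])
  moreover have "card ?A = card (partitions_box a (Suc b))" "card ?B = card (partitions_box (Suc a) b)"
    by (auto intro!: card_image simp: inj_on_def)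
  ultimately have "card (?A \<union> ?B) = (a + Suc b choose a) + (Suc a + b choose Suc a)"
    using 3 by (simp add: card_Un_disjoint)
  also have "\<dots> = Suc a + Suc b choose Suc a"
    by simp
  finally show ?case
    using \<open>finite ?A\<close> \<open>finite ?B\<close> by (simp only: partitions_box_Suc_Suc finite_Un)
qed

lemma length_part_hat [simp]: "length (part_hat b \<tau>) = b"
  by (simp add: part_hat_def part_conj_def)

lemma part_hat_Nil: "part_hat b [] = replicate b 0"
  by (simp add: part_hat_def part_conj_def part_compl_def map_replicate_const)

lemma part_hat_0: "part_hat 0 \<tau> = []"
  by (simp add: part_hat_def part_conj_def)

lemma part_hat_snoc_0:
  "\<forall>v\<in>set \<tau>. v \<le> b \<Longrightarrow> part_hat b (\<tau> @ [0]) = map Suc (part_hat b \<tau>)"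
  by (auto simp: part_hat_def part_conj_def part_compl_def intro!: map_cong)

lemma part_hat_map_Suc:
  "\<forall>v\<in>set \<tau>. v \<le> b \<Longrightarrow> part_hat (Suc b) (map Suc \<tau>) = part_hat b \<tau> @ [0]"
  by (auto simp: part_hat_def part_conj_def part_compl_def o_def filter_empty_conv)

definition staircase_exponents :: "nat \<Rightarrow> nat list \<Rightarrow> nat list" where
  "staircase_exponents b \<tau> = add_staircase \<tau> @ add_staircase (part_hat b \<tau>)"

lemma staircase_exponents_permutation:
  assumes "\<tau> \<in> partitions_box a b"
  shows "distinct (staircase_exponents b \<tau>) \<and> set (staircase_exponents b \<tau>) = {..<a + b}
    \<and> ascending_pairs (staircase_exponents b \<tau>) = part_size (part_hat b \<tau>)"
  using assms
proof (induction a b arbitrary: \<tau> rule: nat_pair_induct)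
  case (1 b)
  then show ?case
    by (simp add: partitions_box_0_left staircase_exponents_def part_hat_Nil part_size_def
        add_staircase_replicate_0 ascending_pairs_rev_upt atLeast0LessThan)
next
  case (2 a)
  then show ?case
    by (simp add: partitions_box_0_right staircase_exponents_def part_hat_0 part_size_def
        add_staircase_replicate_0 ascending_pairs_rev_upt atLeast0LessThan)
next
  case (3 a b)
  from "3.prems" consider (zero_last) t where "t \<in> partitions_box a (Suc b)" "\<tau> = t @ [0]"
    | (positive) t where "t \<in> partitions_box (Suc a) b" "\<tau> = map Suc t"
    unfolding partitions_box_Suc_Suc by blast
  then show ?case
  proof cases
    case zero_last
    let ?h = "part_hat (Suc b) t"
    have "\<forall>v\<in>set t. v \<le> Suc b"
      using zero_last(1) by (simp add: partitions_box_def)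
    then have "staircase_exponents (Suc b) \<tau>
        = map Suc (add_staircase t) @ 0 # map Suc (add_staircase ?h)"
      and "part_size (part_hat (Suc b) \<tau>) = part_size ?h + Suc b"
      by (simp_all add: zero_last(2) staircase_exponents_def part_hat_snoc_0 add_staircase_snoc_0
          add_staircase_map_Suc part_size_def sum_list_map_Suc)
    moreover have "distinct (map Suc p @ 0 # map Suc q) \<longleftrightarrow> distinct (p @ q)"
      and "set (map Suc p @ 0 # map Suc q) = insert 0 (Suc ` set (p @ q))" for p q :: "nat list"
      by (auto simp: distinct_map)
    ultimately show ?thesis
      using "3.IH"(1)[OF zero_last(1)]
      by (simp add: staircase_exponents_def ascending_pairs_insert_0 lessThan_Suc_eq_insert_0)
  next
    case positive
    let ?h = "part_hat b t"
    have "\<forall>v\<in>set t. v \<le> b"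
      using positive(1) by (simp add: partitions_box_def)
    then have "staircase_exponents (Suc b) \<tau> = map Suc (staircase_exponents b t) @ [0]"
      and "part_hat (Suc b) \<tau> = ?h @ [0]"
      by (simp_all add: positive(2) staircase_exponents_def part_hat_map_Suc add_staircase_snoc_0
          add_staircase_map_Suc)
    then show ?thesis
      using "3.IH"(2)[OF positive(1)] strict_mono_Suc
      by (simp add: ascending_pairs_snoc_0 ascending_pairs_map distinct_map part_size_def
          lessThan_Suc_eq_insert_0[of "Suc (a + b)"])
  qed
qed

lemma exponents_shifted_append:
  assumes "length p = a" "length q = b" "j < a + b"
  shows "(map (\<lambda>t. int t + int l - int b) p @ map (\<lambda>t. int t + int l) q) ! j + int (a + b) - 1 - int j
       = int ((add_staircase p @ add_staircase q) ! j + l)"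
  using assms by (cases "j < a") (auto simp: nth_append nth_add_staircase)

lemma signed_schur_part_hat_eq_rectangular:
  fixes x :: "nat \<Rightarrow> real"
  assumes \<tau>: "\<tau> \<in> partitions_box a b"
  shows "(-1) ^ part_size (part_hat b \<tau>) *
      schur (a + b) (map (\<lambda>t. int t + int l - int b) \<tau> @ map (\<lambda>t. int t + int l) (part_hat b \<tau>)) x
    = schur (a + b) (replicate (a + b) (int l)) x"
proof -
  let ?e = "staircase_exponents b \<tau>"
  have perm: "distinct ?e" "set ?e = {..<a + b}" "ascending_pairs ?e = part_size (part_hat b \<tau>)"
    using staircase_exponents_permutation[OF \<tau>] by auto
  have "length \<tau> = a"
    using \<tau> by (simp add: partitions_box_def)
  then have "schur (a + b) (map (\<lambda>t. int t + int l - int b) \<tau> @ map (\<lambda>t. int t + int l) (part_hat b \<tau>)) x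
      = (-1) ^ ascending_pairs ?e * schur (a + b) (replicate (a + b) (int l)) x"
    unfolding staircase_exponents_def
    by (intro schur_eq_if_exponents_permuted[OF perm(1,2)[unfolded staircase_exponents_def]]
        exponents_shifted_append length_part_hat)
  then show ?thesis
    using perm(3) by simp
qed

theorem mainTheorem13:
  fixes a b l :: nat and x :: "nat \<Rightarrow> real"
  assumes "inj_on x {..<a+b}"
  shows "(\<Sum>\<tau>\<in>partitions_box a b.
            (-1) ^ part_size (part_hat b \<tau>) *
            schur (a+b) (map (\<lambda>t. int t + int l - int b) \<tau> @
                         map (\<lambda>t. int t + int l) (part_hat b \<tau>)) x)
         = real ((a+b) choose a) * schur (a+b) (replicate (a+b) (int l)) x"
proof -
  have "(\<Sum>\<tau>\<in>partitions_box a b.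
            (-1) ^ part_size (part_hat b \<tau>) *
            schur (a+b) (map (\<lambda>t. int t + int l - int b) \<tau> @
                         map (\<lambda>t. int t + int l) (part_hat b \<tau>)) x)
      = (\<Sum>\<tau>\<in>partitions_box a b. schur (a+b) (replicate (a+b) (int l)) x)"
    by (intro sum.cong refl signed_schur_part_hat_eq_rectangular)
  also have "\<dots> = real ((a+b) choose a) * schur (a+b) (replicate (a+b) (int l)) x"
    using card_partitions_box by simp
  finally show ?thesis .
qed

end
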